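(* Let $n\ge3$, $1\le i\le n-1$, and define integers $a_1,\dots,a_{i(n-i)}\in\{1,\dots,n-1\}$ by the word $$s_{a_1}s_{a_2}\cdots s_{a_{i(n-i)}}:=(s_is_{i-1}\cdots s_1)(s_{i+1}s_i\cdots s_2)\cdots(s_{n-1}s_{n-2}\cdots s_{n-i})$$ (a product of $n-i$ blocks of $i$ consecutive descending simple reflections; it is a reduced expression of $\bar\omega^{-i}$). For $w\in W_0$ consider the condition $$(\ast)\qquad w<ws_{a_1}<ws_{a_1}s_{a_2}<\cdots<ws_{a_1}s_{a_2}\cdots s_{a_{i(n-i)}}$$ in the Bruhat order. Then: (a) $w$ satisfies $(\ast)$ if and only if $w\in W_{(i),0}$. (b) $w$ violates $(\ast)$ at exactly one place (i.e. there is exactly one $j$ with $ws_{a_1}\cdots s_{a_{j-1}}\not< ws_{a_1}\cdots s_{a_j}$) if and only if $w\in s_iW_{(i),0}$. In this case, for the unique $1\le j\le i(n-i)$ with $ws_{a_1}\cdots s_{a_{j-1}}>ws_{a_1}\cdots s_{a_{j-1}}s_{a_j}$, one has $ws_{a_1}\cdots s_{a_{j-1}}(\alpha_{a_j})=-\alpha_i$.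
   Context: $W_0=\mathfrak{S}_n$ is the Weyl group of $\mathrm{GL}_n$, with simple reflections $s_j=(j,j+1)$, Bruhat order $\le$, and acting on the roots $\alpha_{j,k}$ ($j\ne k$; $\alpha_{j,k}(\mathrm{diag}(t_1,\dots,t_n))=t_jt_k^{-1}$) by $w(\alpha_{j,k})=\alpha_{w(j),w(k)}$; simple roots $\alpha_j=\alpha_{j,j+1}$, and $-\alpha_{j,k}=\alpha_{k,j}$. $\bar\omega$ is the $n$-cycle with $\bar\omega(1)=n$, $\bar\omega(k)=k-1$ for $k\ge2$. $W_{(i),0}$ is the subgroup generated by $\{s_j:j\ne i\}$. *)

theory Defs
  imports "HOL-Combinatorics.Combinatorics"
begin

text \<open>Elements of W_0 = S_n are permutations of {1..n} (functions nat => nat with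
  w permutes {1..n}); product w s is composition w o s (apply s first).\<close>

definition sref :: "nat \<Rightarrow> nat \<Rightarrow> nat" where
  "sref j = Transposition.transpose j (Suc j)"

text \<open>Coxeter length = number of inversions.\<close>
definition perm_len :: "nat \<Rightarrow> (nat \<Rightarrow> nat) \<Rightarrow> nat" where
  "perm_len n w = card {(j, k). 1 \<le> j \<and> j < k \<and> k \<le> n \<and> w k < w j}"

definition bruhat_step :: "nat \<Rightarrow> (nat \<Rightarrow> nat) \<Rightarrow> (nat \<Rightarrow> nat) \<Rightarrow> bool" where
  "bruhat_step n u v \<longleftrightarrow> (\<exists>j k. 1 \<le> j \<and> j < k \<and> k \<le> n \<and>
      v = u \<circ> Transposition.transpose j k \<and> perm_len n u < perm_len n v)"

definition bruhat_le :: "nat \<Rightarrow> (nat \<Rightarrow> nat) \<Rightarrow> (nat \<Rightarrow> nat) \<Rightarrow> bool" where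
  "bruhat_le n = (bruhat_step n)\<^sup>*\<^sup>*"

definition bruhat_less :: "nat \<Rightarrow> (nat \<Rightarrow> nat) \<Rightarrow> (nat \<Rightarrow> nat) \<Rightarrow> bool" where
  "bruhat_less n u v \<longleftrightarrow> bruhat_le n u v \<and> u \<noteq> v"

inductive_set parabolic :: "nat \<Rightarrow> nat \<Rightarrow> (nat \<Rightarrow> nat) set" for n i where
  id_in: "id \<in> parabolic n i"
| step: "g \<in> parabolic n i \<Longrightarrow> 1 \<le> j \<Longrightarrow> j < n \<Longrightarrow> j \<noteq> i \<Longrightarrow> g \<circ> sref j \<in> parabolic n i"

text \<open>The word (s_i ... s_1)(s_{i+1} ... s_2)...(s_{n-1} ... s_{n-i}) as the list [a_1,...].\<close>
definition word :: "nat \<Rightarrow> nat \<Rightarrow> nat list" where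
  "word n i = concat (map (\<lambda>b. map (\<lambda>t. i + b - t) [0..<i]) [0..<n - i])"

definition pprod :: "nat \<Rightarrow> nat \<Rightarrow> (nat \<Rightarrow> nat) \<Rightarrow> nat \<Rightarrow> (nat \<Rightarrow> nat)" where
  "pprod n i w j = foldl (\<lambda>u a. u \<circ> sref a) w (take j (word n i))"

text \<open>Roots alpha_{j,k} represented as pairs (j,k); u(alpha_{j,k}) = alpha_{u j, u k};
  -alpha_i = alpha_{i+1,i}.\<close>

end

theory Submission
  imports Defs
begin

text \<open>The prefixes of the word are explicit: if s_a is its j-th letter, then
  w s_{a_1} ... s_{a_{j-1}} takes the values w k and w l at a and a + 1, where (k, l) = step_pair i j
  runs bijectively through {1..i} \<times> {i+1..n}. Since right multiplication by s_a goes up in the Bruhat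
  order exactly when it creates an inversion, the j-th step goes down iff (k, l) is an inversion of w
  between the first i and the last n - i positions. There is no such cross inversion iff w stabilises
  {1..i}, i.e. w \<in> W_(i),0; there is exactly one iff w k = i + 1 and w l = i for it, i.e.
  s_i w \<in> W_(i),0, and then the root at the descent is \<alpha>_{i+1,i} = -\<alpha>_i.\<close>

definition inversions :: "nat \<Rightarrow> (nat \<Rightarrow> nat) \<Rightarrow> (nat \<times> nat) set" where
  "inversions n u = {(j, k). 1 \<le> j \<and> j < k \<and> k \<le> n \<and> u k < u j}"

lemma perm_len_eq_card_inversions: "perm_len n u = card (inversions n u)"
  unfolding perm_len_def inversions_def by simp

lemma finite_inversions: "finite (inversions n u)"
  by (rule finite_subset[of _ "{1..n} \<times> {1..n}"]) (auto simp: inversions_def)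

lemma sref_apply: "sref a x = (if x = a then Suc a else if x = Suc a then a else x)"
  by (simp add: sref_def transpose_def)

lemma comp_sref_sref [simp]: "u \<circ> sref a \<circ> sref a = u"
  by (auto simp: fun_eq_iff sref_apply)

lemma sref_comp_sref_comp [simp]: "sref a \<circ> (sref a \<circ> u) = u"
  by (auto simp: fun_eq_iff sref_apply)

lemma sref_permutes: "1 \<le> a \<Longrightarrow> a < n \<Longrightarrow> sref a permutes {1..n}"
  unfolding sref_def by (rule permutes_swap_id) auto

text \<open>Swapping the positions a, a+1 permutes all inversions other than (a, a+1) among themselves.\<close>

lemma card_inversions_comp_sref_remove:
  assumes "1 \<le> a" "a < n"
  shows "card (inversions n (u \<circ> sref a) - {(a, Suc a)}) = card (inversions n u - {(a, Suc a)})"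
proof -
  let ?swap = "\<lambda>(j, k). (sref a j, sref a k)"
  have le: "card (inversions n v - {(a, Suc a)}) \<le> card (inversions n (v \<circ> sref a) - {(a, Suc a)})"
    for v
  proof -
    have "inj ?swap"
      by (auto simp: inj_def sref_apply split: if_splits)
    moreover have "?swap ` (inversions n v - {(a, Suc a)}) \<subseteq> inversions n (v \<circ> sref a) - {(a, Suc a)}"
      using assms by (auto simp: inversions_def sref_apply split: if_splits)
    ultimately show ?thesis
      by (metis card_image card_mono finite_Diff finite_inversions inj_on_subset subset_UNIV)
  qed
  show ?thesis
    using le[of u] le[of "u \<circ> sref a"] by simp
qed

lemma perm_len_comp_sref_ascent:
  assumes "1 \<le> a" "a < n" "u a < u (Suc a)"
  shows "perm_len n (u \<circ> sref a) = Suc (perm_len n u)"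
proof -
  have "(a, Suc a) \<in> inversions n (u \<circ> sref a)" "(a, Suc a) \<notin> inversions n u"
    using assms by (auto simp: inversions_def sref_apply)
  then show ?thesis
    using card_inversions_comp_sref_remove[OF assms(1,2), of u]
    by (metis perm_len_eq_card_inversions card_Suc_Diff1 finite_inversions Diff_empty Diff_insert0)
qed

lemma bruhat_le_imp_perm_len_less: "bruhat_le n u v \<Longrightarrow> u \<noteq> v \<Longrightarrow> perm_len n u < perm_len n v"
  unfolding bruhat_le_def
proof (induction rule: rtranclp_induct)
  case (step y z)
  then show ?case
    unfolding bruhat_step_def by (cases "u = y") auto
qed simp

lemma bruhat_less_comp_sref_iff:
  assumes "1 \<le> a" "a < n" "u a \<noteq> u (Suc a)"
  shows "bruhat_less n u (u \<circ> sref a) \<longleftrightarrow> u a < u (Suc a)"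
proof
  assume "u a < u (Suc a)"
  then have "bruhat_step n u (u \<circ> sref a)"
    unfolding bruhat_step_def using assms perm_len_comp_sref_ascent
    by (intro exI[of _ a] exI[of _ "Suc a"]) (auto simp: sref_def)
  moreover have "u \<circ> sref a \<noteq> u"
    using assms by (metis comp_apply sref_apply n_not_Suc_n)
  ultimately show "bruhat_less n u (u \<circ> sref a)"
    unfolding bruhat_less_def bruhat_le_def by auto
next
  assume less: "bruhat_less n u (u \<circ> sref a)"
  show "u a < u (Suc a)"
  proof (rule ccontr)
    assume "\<not> u a < u (Suc a)"
    then have "perm_len n (u \<circ> sref a \<circ> sref a) = Suc (perm_len n (u \<circ> sref a))"
      using assms by (intro perm_len_comp_sref_ascent) (auto simp: sref_apply)
    then show False
      using less bruhat_le_imp_perm_len_less unfolding bruhat_less_def by fastforce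
  qed
qed

definition word_letter :: "nat \<Rightarrow> nat \<Rightarrow> nat" where
  "word_letter i m = i + m div i - m mod i"

lemma word_eq_map_word_letter:
  assumes "0 < i"
  shows "word n i = map (word_letter i) [0..<i * (n - i)]"
proof -
  have "concat (map (\<lambda>b. map (\<lambda>t. i + b - t) [0..<i]) [0..<k]) = map (word_letter i) [0..<i * k]"
    for k
  proof (induction k)
    case (Suc k)
    have "[0..<i * Suc k] = [0..<i * k] @ map (\<lambda>t. t + i * k) [0..<i]"
      using upt_add_eq_append[of 0 "i * k" i] by (simp add: map_add_upt add.commute)
    moreover have "map (word_letter i) (map (\<lambda>t. t + i * k) [0..<i]) = map (\<lambda>t. i + k - t) [0..<i]"
      using assms by (auto simp: word_letter_def)
    ultimately show ?case
      using Suc by simp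
  qed simp
  then show ?thesis
    unfolding word_def .
qed

primrec word_prefix :: "nat \<Rightarrow> nat \<Rightarrow> nat \<Rightarrow> nat" where
  "word_prefix i 0 = id"
| "word_prefix i (Suc m) = word_prefix i m \<circ> sref (word_letter i m)"

lemma pprod_eq_comp_word_prefix:
  assumes "0 < i" "j \<le> i * (n - i)"
  shows "pprod n i w j = w \<circ> word_prefix i j"
proof -
  have "foldl (\<lambda>u a. u \<circ> sref a) w (map (word_letter i) [0..<j]) = w \<circ> word_prefix i j"
    by (induction j) (simp_all add: comp_assoc)
  then show ?thesis
    using assms unfolding pprod_def word_eq_map_word_letter[OF assms(1)]
    by (simp add: take_map min_def)
qed

text \<open>Closed form of the prefixes: after b complete blocks the prefix is x \<mapsto> i + x on {1..b} and
  x \<mapsto> x - b on {b+1..b+i}; the first t letters of the next block compose it on the right with the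
  cycle sending i+b+1-t to i+b+1 and moving i+b+2-t, ..., i+b+1 down by one.\<close>

definition blocks_prefix :: "nat \<Rightarrow> nat \<Rightarrow> nat \<Rightarrow> nat" where
  "blocks_prefix i b x = (if 1 \<le> x \<and> x \<le> b then i + x else if b < x \<and> x \<le> b + i then x - b else x)"

definition block_cycle :: "nat \<Rightarrow> nat \<Rightarrow> nat \<Rightarrow> nat \<Rightarrow> nat" where
  "block_cycle i b t x = (if x = i + b + 1 - t then i + b + 1
     else if i + b + 1 - t < x \<and> x \<le> i + b + 1 then x - 1 else x)"

lemma word_prefix_eq_blocks_prefix_comp_block_cycle:
  assumes "0 < i"
  shows "word_prefix i m = blocks_prefix i (m div i) \<circ> block_cycle i (m div i) (m mod i)"
proof (induction m)
  case 0
  show ?case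
    by (auto simp: fun_eq_iff blocks_prefix_def block_cycle_def)
next
  case (Suc m)
  have cycle_Suc: "block_cycle i b (Suc t) = block_cycle i b t \<circ> sref (i + b - t)" if "t < i" for b t
    using that by (auto simp: fun_eq_iff block_cycle_def sref_apply)
  have "m mod i < i"
    using assms by simp
  show ?case
  proof (cases "Suc (m mod i) = i")
    case True
    then have "Suc m mod i = 0" "Suc m div i = Suc (m div i)"
      by (simp_all add: mod_Suc div_Suc)
    moreover have "blocks_prefix i (Suc b) = blocks_prefix i b \<circ> block_cycle i b i" for b
      by (auto simp: fun_eq_iff block_cycle_def blocks_prefix_def)
    moreover have "block_cycle i b 0 = id" for b
      by (auto simp: fun_eq_iff block_cycle_def)
    ultimately show ?thesis
      using Suc True cycle_Suc[of "m mod i" "m div i"]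
      by (simp add: word_letter_def comp_assoc)
  next
    case False
    then have "Suc m mod i = Suc (m mod i)" "Suc m div i = m div i"
      by (simp_all add: mod_Suc div_Suc)
    then show ?thesis
      using Suc \<open>m mod i < i\<close> by (simp add: cycle_Suc word_letter_def comp_assoc)
  qed
qed

lemma word_prefix_at_word_letter:
  assumes "0 < i"
  shows "word_prefix i m (word_letter i m) = i - m mod i"
    and "word_prefix i m (Suc (word_letter i m)) = i + 1 + m div i"
proof -
  have "blocks_prefix i b (block_cycle i b t (i + b - t)) = i - t"
    and "blocks_prefix i b (block_cycle i b t (Suc (i + b - t))) = i + 1 + b" if "t < i" for b t
    using that by (auto simp: blocks_prefix_def block_cycle_def)
  moreover have "m mod i < i"
    using assms by simp
  ultimately show "word_prefix i m (word_letter i m) = i - m mod i"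
    and "word_prefix i m (Suc (word_letter i m)) = i + 1 + m div i"
    by (simp_all add: word_prefix_eq_blocks_prefix_comp_block_cycle[OF assms] word_letter_def)
qed

definition step_pair :: "nat \<Rightarrow> nat \<Rightarrow> nat \<times> nat" where
  "step_pair i j = (i - (j - 1) mod i, i + 1 + (j - 1) div i)"

lemma bij_betw_step_pair:
  assumes "1 \<le> i" "i < n"
  shows "bij_betw (step_pair i) {1..i * (n - i)} ({1..i} \<times> {Suc i..n})"
proof (rule bij_betw_imageI)
  show "inj_on (step_pair i) {1..i * (n - i)}"
  proof (rule inj_onI)
    fix x y assume x: "x \<in> {1..i * (n - i)}" and y: "y \<in> {1..i * (n - i)}"
      and eq: "step_pair i x = step_pair i y"
    have "i - (x - 1) mod i = i - (y - 1) mod i" "(x - 1) div i = (y - 1) div i"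
      using eq unfolding step_pair_def by simp_all
    moreover have "(x - 1) mod i < i" "(y - 1) mod i < i"
      using assms by simp_all
    ultimately have "(x - 1) mod i = (y - 1) mod i" "(x - 1) div i = (y - 1) div i"
      by arith+
    then have "x - 1 = y - 1"
      by (metis div_mult_mod_eq)
    then show "x = y"
      using x y by simp arith
  qed
  show "step_pair i ` {1..i * (n - i)} = {1..i} \<times> {Suc i..n}"
  proof (intro equalityI subsetI)
    fix p assume "p \<in> step_pair i ` {1..i * (n - i)}"
    then obtain j where j: "j \<in> {1..i * (n - i)}" "p = step_pair i j"
      by auto
    then have "j - 1 < (n - i) * i"
      by (simp add: mult.commute) arith
    then have "(j - 1) div i < n - i"
      by (rule less_mult_imp_div_less)
    moreover have "(j - 1) mod i < i"
      using assms by simp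
    ultimately show "p \<in> {1..i} \<times> {Suc i..n}"
      using j unfolding step_pair_def by auto
  next
    fix p assume "p \<in> {1..i} \<times> {Suc i..n}"
    then obtain k l where p: "p = (k, l)" "k \<in> {1..i}" "l \<in> {Suc i..n}"
      by auto
    define j where "j = (l - Suc i) * i + (i - k) + 1"
    have "i - k < i" "j - 1 = (i - k) + (l - Suc i) * i"
      using p unfolding j_def by auto
    then have "(j - 1) div i = l - Suc i" "(j - 1) mod i = i - k"
      by simp_all
    then have "step_pair i j = p"
      using p unfolding step_pair_def by auto
    moreover have "Suc (l - Suc i) * i \<le> (n - i) * i"
      using p by (intro mult_right_mono) auto
    then have "j \<in> {1..i * (n - i)}"
      using p unfolding j_def by (simp add: mult.commute) arith
    ultimately show "p \<in> step_pair i ` {1..i * (n - i)}"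
      by force
  qed
qed

lemma pprod_step:
  assumes "1 \<le> i" "i < n" "j \<in> {1..i * (n - i)}"
  defines "a \<equiv> word n i ! (j - 1)"
  shows "1 \<le> a" "a < n" "pprod n i w j = pprod n i w (j - 1) \<circ> sref a"
    and "(pprod n i w (j - 1) a, pprod n i w (j - 1) (Suc a)) = map_prod w w (step_pair i j)"
proof -
  define m where "m = j - 1"
  have "0 < i" "m < i * (n - i)" "j = Suc m"
    using assms unfolding m_def by auto
  have "m div i < n - i"
    using \<open>m < i * (n - i)\<close> by (simp add: less_mult_imp_div_less mult.commute)
  have "m mod i < i"
    using \<open>0 < i\<close> by simp
  have a: "a = word_letter i m"
    using \<open>0 < i\<close> \<open>m < i * (n - i)\<close> unfolding a_def m_def by (simp add: word_eq_map_word_letter)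
  show "1 \<le> a" "a < n"
    using \<open>m div i < n - i\<close> \<open>m mod i < i\<close> unfolding a word_letter_def by linarith+
  show "pprod n i w j = pprod n i w (j - 1) \<circ> sref a"
    using \<open>0 < i\<close> \<open>m < i * (n - i)\<close> \<open>j = Suc m\<close>
    by (simp add: a pprod_eq_comp_word_prefix comp_assoc)
  show "(pprod n i w (j - 1) a, pprod n i w (j - 1) (Suc a)) = map_prod w w (step_pair i j)"
    using \<open>0 < i\<close> \<open>m < i * (n - i)\<close> unfolding m_def[symmetric]
    by (simp add: a pprod_eq_comp_word_prefix word_prefix_at_word_letter step_pair_def m_def)
qed

definition cross_inversions :: "nat \<Rightarrow> nat \<Rightarrow> (nat \<Rightarrow> nat) \<Rightarrow> (nat \<times> nat) set" where
  "cross_inversions n i w = {(k, l). k \<in> {1..i} \<and> l \<in> {Suc i..n} \<and> w l < w k}"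

lemma permutes_ex_descent:
  assumes w: "w permutes {1..n}" and "w \<noteq> id"
  shows "\<exists>a. 1 \<le> a \<and> a < n \<and> w (Suc a) < w a"
proof (rule ccontr)
  assume "\<not> ?thesis"
  then have "\<forall>a. 1 \<le> a \<and> a < n \<longrightarrow> w a \<le> w (Suc a)"
    by (meson not_le)
  then have "sorted (map w [1..<Suc n])"
    by (simp add: sorted_iff_nth_Suc del: upt_Suc)
  moreover have "distinct (map w [1..<Suc n])"
    using permutes_inj[OF w] by (simp add: distinct_map inj_on_subset)
  moreover have "set (map w [1..<Suc n]) = set [1..<Suc n]"
    using permutes_image[OF w] by (simp add: atLeastLessThanSuc_atLeastAtMost del: upt_Suc)
  ultimately have "map w [1..<Suc n] = [1..<Suc n]"
    by (intro sorted_distinct_set_unique) (simp_all del: upt_Suc)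
  then have "\<forall>x\<in>set [1..<Suc n]. w x = x"
    by (metis map_eq_conv map_ident)
  then have "w x = x" for x
    using permutes_not_in[OF w, of x] by (cases "x \<in> {1..n}") (auto simp del: upt_Suc)
  then show False
    using \<open>w \<noteq> id\<close> by auto
qed

lemma cross_inversions_comp_sref_empty:
  assumes "cross_inversions n i g = {}" "1 \<le> a" "a < n" "a \<noteq> i"
  shows "cross_inversions n i (g \<circ> sref a) = {}"
proof -
  have "(sref a k, sref a l) \<in> cross_inversions n i g" if "(k, l) \<in> cross_inversions n i (g \<circ> sref a)" for k l
    using that assms(2-4) by (auto simp: cross_inversions_def sref_apply split: if_splits)
  then show ?thesis
    using assms(1) by auto
qed

lemma parabolic_iff_cross_inversions_empty:
  assumes w: "w permutes {1..n}" and "i < n"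
  shows "w \<in> parabolic n i \<longleftrightarrow> cross_inversions n i w = {}"
proof
  assume "w \<in> parabolic n i"
  then show "cross_inversions n i w = {}"
  proof induction
    case id_in
    show ?case
      by (auto simp: cross_inversions_def)
  next
    case (step g j)
    then show ?case
      using cross_inversions_comp_sref_empty[of n i g j] by blast
  qed
next
  show "cross_inversions n i w = {} \<Longrightarrow> w \<in> parabolic n i"
    using w
  proof (induction "perm_len n w" arbitrary: w rule: less_induct)
    case less
    show ?case
    proof (cases "w = id")
      case True
      then show ?thesis
        by (simp add: parabolic.id_in)
    next
      case False
      then obtain a where a: "1 \<le> a" "a < n" "w (Suc a) < w a"
        using permutes_ex_descent[OF less.prems(2)] by blast
      then have "a \<noteq> i"
        using less.prems(1) \<open>i < n\<close> unfolding cross_inversions_def by auto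
      have "perm_len n (w \<circ> sref a \<circ> sref a) = Suc (perm_len n (w \<circ> sref a))"
        using a by (intro perm_len_comp_sref_ascent) (auto simp: sref_apply)
      moreover have "w \<circ> sref a permutes {1..n}"
        using permutes_compose[OF sref_permutes[OF a(1,2)] less.prems(2)] .
      ultimately have "w \<circ> sref a \<in> parabolic n i"
        using less cross_inversions_comp_sref_empty \<open>a \<noteq> i\<close> a by simp
      then show ?thesis
        using parabolic.step[of "w \<circ> sref a" n i a] \<open>a \<noteq> i\<close> a by simp
    qed
  qed
qed

lemma sref_comp_mem_coset_iff: "w \<in> (\<lambda>g. sref i \<circ> g) ` G \<longleftrightarrow> sref i \<circ> w \<in> G"
proof
  assume "w \<in> (\<lambda>g. sref i \<circ> g) ` G"
  then show "sref i \<circ> w \<in> G"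
    by auto
next
  assume "sref i \<circ> w \<in> G"
  then show "w \<in> (\<lambda>g. sref i \<circ> g) ` G"
    by (rule rev_image_eqI) simp
qed

text \<open>Left multiplication by s_c reverses the order of the values c and c + 1 only.\<close>

lemma cross_inversions_sref_comp:
  "cross_inversions n i (sref c \<circ> w) =
     {(k, l). k \<in> {1..i} \<and> l \<in> {Suc i..n} \<and> (w l < w k \<longleftrightarrow> {w k, w l} \<noteq> {c, Suc c})}"
  by (auto simp: cross_inversions_def sref_apply doubleton_eq_iff)

lemma cross_inversions_empty_imp_image:
  assumes w: "w permutes {1..n}" and "i \<le> n" and empty: "cross_inversions n i w = {}"
  shows "w ` {1..i} = {1..i}"
proof -
  have card_w_image: "card (w ` {1..i}) = card {1..i}"
    using permutes_inj[OF w] by (simp add: card_image inj_on_subset)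
  have "w ` {1..i} \<subseteq> {1..i}"
  proof
    fix c assume "c \<in> w ` {1..i}"
    then obtain k where k: "k \<in> {1..i}" "w k = c"
      by blast
    show "c \<in> {1..i}"
    proof (rule ccontr)
      assume "c \<notin> {1..i}"
      have "\<not> {1..i} \<subseteq> w ` {1..i}"
      proof
        assume "{1..i} \<subseteq> w ` {1..i}"
        then have "{1..i} = w ` {1..i}"
          by (rule card_subset_eq[OF finite_imageI[OF finite_atLeastAtMost] _ card_w_image[symmetric]])
        then show False
          using \<open>c \<in> w ` {1..i}\<close> \<open>c \<notin> {1..i}\<close> by simp
      qed
      then obtain d where d: "d \<in> {1..i}" "d \<notin> w ` {1..i}"
        by blast
      then have "d \<in> w ` {1..n}"
        using \<open>i \<le> n\<close> permutes_image[OF w] by auto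
      then obtain l where "l \<in> {1..n}" "w l = d"
        by blast
      moreover have "l \<notin> {1..i}"
        using d \<open>w l = d\<close> by blast
      moreover have "c \<in> {1..n}"
        using k \<open>i \<le> n\<close> permutes_in_image[OF w, of k] by auto
      ultimately have "(k, l) \<in> cross_inversions n i w"
        using k d \<open>c \<notin> {1..i}\<close> unfolding cross_inversions_def by auto
      then show False
        using empty by simp
    qed
  qed
  then show ?thesis
    by (rule card_subset_eq[OF finite_atLeastAtMost _ card_w_image])
qed

lemma cross_inversions_emptyD:
  assumes w: "w permutes {1..n}" and "cross_inversions n i w = {}" "k \<in> {1..i}" "l \<in> {Suc i..n}"
  shows "w k < w l"
proof -
  have "w k \<noteq> w l"
    using assms(3,4) injD[OF permutes_inj[OF w]] by fastforce
  moreover have "\<not> w l < w k"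
    using assms(2-4) unfolding cross_inversions_def by auto
  ultimately show ?thesis
    by simp
qed

lemma cross_inversions_sref_comp_emptyE:
  assumes w: "w permutes {1..n}" and i: "1 \<le> i" "i < n"
    and empty: "cross_inversions n i (sref i \<circ> w) = {}"
  obtains k l where "cross_inversions n i w = {(k, l)}" "w k = Suc i" "w l = i"
proof -
  define v where "v = sref i \<circ> w"
  have v: "v permutes {1..n}"
    unfolding v_def using permutes_compose[OF w sref_permutes[OF i]] .
  have v_image: "v ` {1..i} = {1..i}"
    using cross_inversions_empty_imp_image[OF v] empty i unfolding v_def by simp
  have "w = sref i \<circ> v"
    unfolding v_def by simp
  have "(v l < v k \<longleftrightarrow> {v k, v l} \<noteq> {i, Suc i}) \<longleftrightarrow> v k = i \<and> v l = Suc i"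
    if "k \<in> {1..i}" "l \<in> {Suc i..n}" for k l
    using cross_inversions_emptyD[OF v empty[folded v_def] that] by (auto simp: doubleton_eq_iff)
  then have cross: "cross_inversions n i w =
      {(k, l). k \<in> {1..i} \<and> l \<in> {Suc i..n} \<and> v k = i \<and> v l = Suc i}"
    unfolding \<open>w = sref i \<circ> v\<close> cross_inversions_sref_comp by blast
  have "i \<in> v ` {1..i}"
    using v_image i by simp
  then obtain k where k: "i = v k" "k \<in> {1..i}"
    by (rule imageE)
  have "Suc i \<in> v ` {1..n}"
    using permutes_image[OF v] i by simp
  then obtain l where l: "Suc i = v l" "l \<in> {1..n}"
    by (rule imageE)
  have "l \<notin> {1..i}"
  proof
    assume "l \<in> {1..i}"
    then have "v l \<in> {1..i}"
      using v_image by blast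
    with l show False
      by auto
  qed
  have "cross_inversions n i w = {(k, l)}"
    using k l \<open>l \<notin> {1..i}\<close> injD[OF permutes_inj[OF v]] unfolding cross by auto
  moreover have "w k = Suc i" "w l = i"
    using k(1) l(1) \<open>w = sref i \<circ> v\<close> by (simp_all add: sref_apply)
  ultimately show ?thesis
    using that by blast
qed

text \<open>A value strictly between w l and w k would create a second cross inversion.\<close>

lemma cross_inversions_singleton_consecutive:
  assumes w: "w permutes {1..n}" and "i < n" and single: "cross_inversions n i w = {(k, l)}"
  shows "w k = Suc (w l)"
proof (rule ccontr)
  have k: "k \<in> {1..i}" and l: "l \<in> {Suc i..n}" and "w l < w k"
    using single unfolding cross_inversions_def by auto
  have unique: "k' = k \<and> l' = l" if "k' \<in> {1..i}" "l' \<in> {Suc i..n}" "w l' < w k'" for k' l'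
    using that single unfolding cross_inversions_def by blast
  assume "w k \<noteq> Suc (w l)"
  then have "Suc (w l) < w k"
    using \<open>w l < w k\<close> by simp
  moreover have "w k \<in> {1..n}"
    using k \<open>i < n\<close> permutes_in_image[OF w, of k] by auto
  ultimately have "Suc (w l) \<in> w ` {1..n}"
    using permutes_image[OF w] by auto
  then obtain x where x: "Suc (w l) = w x" "x \<in> {1..n}"
    by (rule imageE)
  show False
  proof (cases "x \<le> i")
    case True
    then show False
      using unique[of x l] x l \<open>Suc (w l) < w k\<close> by auto
  next
    case False
    then show False
      using unique[of k x] x k \<open>Suc (w l) < w k\<close> by auto
  qed
qed

lemma cross_inversions_singleton_imp_sref_comp_empty:
  assumes w: "w permutes {1..n}" and "i < n" and single: "cross_inversions n i w = {(k, l)}"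
  shows "cross_inversions n i (sref i \<circ> w) = {}"
proof -
  have k: "k \<in> {1..i}" and l: "l \<in> {Suc i..n}"
    using single unfolding cross_inversions_def by auto
  define c where "c = w l"
  have consecutive: "w k = Suc c"
    unfolding c_def by (rule cross_inversions_singleton_consecutive[OF assms])
  have "w l' < w k' \<longleftrightarrow> {w k', w l'} = {c, Suc c}" if "k' \<in> {1..i}" "l' \<in> {Suc i..n}" for k' l'
  proof
    assume "w l' < w k'"
    then have "(k', l') = (k, l)"
      using that single unfolding cross_inversions_def by blast
    then show "{w k', w l'} = {c, Suc c}"
      using consecutive unfolding c_def by auto
  next
    assume "{w k', w l'} = {c, Suc c}"
    moreover have "w k' \<noteq> w l"
      using that l injD[OF permutes_inj[OF w]] by fastforce
    ultimately show "w l' < w k'"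
      unfolding c_def by (auto simp: doubleton_eq_iff)
  qed
  then have empty: "cross_inversions n i (sref c \<circ> w) = {}"
    unfolding cross_inversions_sref_comp by blast
  have "1 \<le> c" "c < n"
    using permutes_in_image[OF w, of l] permutes_in_image[OF w, of k] k l consecutive
    unfolding c_def by auto
  then have perm: "sref c \<circ> w permutes {1..n}"
    by (intro permutes_compose[OF w] sref_permutes)
  then have image: "(sref c \<circ> w) ` {1..i} = {1..i}"
    using cross_inversions_empty_imp_image[OF _ _ empty] \<open>i < n\<close> by simp
  have "(sref c \<circ> w) k = c" "(sref c \<circ> w) l = Suc c"
    using consecutive by (simp_all add: sref_apply c_def)
  then have "c \<in> {1..i}" "Suc c \<notin> {1..i}"
    using image k l inj_image_mem_iff[OF permutes_inj[OF perm], of l "{1..i}"]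
    by (metis image_eqI, auto)
  then have "c = i"
    by simp
  with empty show ?thesis
    by simp
qed

lemma bruhat_less_pprod_step_iff:
  assumes w: "w permutes {1..n}" and i: "1 \<le> i" "i < n" and j: "j \<in> {1..i * (n - i)}"
  shows "bruhat_less n (pprod n i w (j - 1)) (pprod n i w j) \<longleftrightarrow> step_pair i j \<notin> cross_inversions n i w"
    and "bruhat_less n (pprod n i w j) (pprod n i w (j - 1)) \<longleftrightarrow> step_pair i j \<in> cross_inversions n i w"
proof -
  define u where "u = pprod n i w (j - 1)"
  define a where "a = word n i ! (j - 1)"
  obtain k l where kl: "step_pair i j = (k, l)"
    by (cases "step_pair i j")
  have "(k, l) \<in> {1..i} \<times> {Suc i..n}"
    using bij_betw_imp_surj_on[OF bij_betw_step_pair[OF i]] j kl by (metis image_eqI)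
  then have k: "k \<in> {1..i}" and l: "l \<in> {Suc i..n}"
    by auto
  have a: "1 \<le> a" "a < n" and next_u: "pprod n i w j = u \<circ> sref a"
    and u_values: "u a = w k" "u (Suc a) = w l"
    using pprod_step[OF i j] kl unfolding u_def a_def by simp_all
  have "w k \<noteq> w l"
  proof
    assume "w k = w l"
    then have "k = l"
      by (rule injD[OF permutes_inj[OF w]])
    with k l show False
      by simp
  qed
  have "bruhat_less n u (u \<circ> sref a) \<longleftrightarrow> w k < w l"
    using bruhat_less_comp_sref_iff[OF a, of u] u_values \<open>w k \<noteq> w l\<close> by simp
  moreover have "bruhat_less n (u \<circ> sref a) u \<longleftrightarrow> w l < w k"
    using bruhat_less_comp_sref_iff[OF a, of "u \<circ> sref a"] u_values \<open>w k \<noteq> w l\<close>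
    by (simp add: sref_apply)
  moreover have "(k, l) \<in> cross_inversions n i w \<longleftrightarrow> w l < w k"
    using k l unfolding cross_inversions_def by simp
  ultimately show "bruhat_less n (pprod n i w (j - 1)) (pprod n i w j) \<longleftrightarrow> step_pair i j \<notin> cross_inversions n i w"
    and "bruhat_less n (pprod n i w j) (pprod n i w (j - 1)) \<longleftrightarrow> step_pair i j \<in> cross_inversions n i w"
    using \<open>w k \<noteq> w l\<close> unfolding kl next_u u_def[symmetric] by auto
qed

definition descents :: "nat \<Rightarrow> nat \<Rightarrow> (nat \<Rightarrow> nat) \<Rightarrow> nat set" where
  "descents n i w = {j \<in> {1..i * (n - i)}. bruhat_less n (pprod n i w j) (pprod n i w (j - 1))}"

lemma non_ascents_eq_descents:
  assumes "w permutes {1..n}" and "1 \<le> i" "i < n"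
  shows "{j \<in> {1..i * (n - i)}. \<not> bruhat_less n (pprod n i w (j - 1)) (pprod n i w j)} = descents n i w"
  using bruhat_less_pprod_step_iff[OF assms] unfolding descents_def by auto

lemma bij_betw_step_pair_descents:
  assumes w: "w permutes {1..n}" and i: "1 \<le> i" "i < n"
  shows "bij_betw (step_pair i) (descents n i w) (cross_inversions n i w)"
proof (rule bij_betw_subset[OF bij_betw_step_pair[OF i]])
  have descents: "descents n i w = {j \<in> {1..i * (n - i)}. step_pair i j \<in> cross_inversions n i w}"
    using bruhat_less_pprod_step_iff(2)[OF w i] unfolding descents_def by blast
  have "cross_inversions n i w \<subseteq> step_pair i ` {1..i * (n - i)}"
    unfolding bij_betw_imp_surj_on[OF bij_betw_step_pair[OF i]] by (auto simp: cross_inversions_def)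
  then show "step_pair i ` descents n i w = cross_inversions n i w"
    unfolding descents by blast
qed (auto simp: descents_def)

lemma all_ascents_iff_parabolic:
  assumes w: "w permutes {1..n}" and i: "1 \<le> i" "i < n"
  shows "(\<forall>j\<in>{1..i * (n - i)}. bruhat_less n (pprod n i w (j - 1)) (pprod n i w j))
    \<longleftrightarrow> w \<in> parabolic n i"
proof -
  have "(\<forall>j\<in>{1..i * (n - i)}. bruhat_less n (pprod n i w (j - 1)) (pprod n i w j))
      \<longleftrightarrow> descents n i w = {}"
    using non_ascents_eq_descents[OF w i] by blast
  also have "\<dots> \<longleftrightarrow> cross_inversions n i w = {}"
    using bij_betw_imp_surj_on[OF bij_betw_step_pair_descents[OF w i]] by auto
  finally show ?thesis
    using parabolic_iff_cross_inversions_empty[OF w i(2)] by simp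
qed

lemma coset_iff_cross_inversions_sref_comp_empty:
  assumes w: "w permutes {1..n}" and i: "1 \<le> i" "i < n"
  shows "w \<in> (\<lambda>g. sref i \<circ> g) ` parabolic n i \<longleftrightarrow> cross_inversions n i (sref i \<circ> w) = {}"
  unfolding sref_comp_mem_coset_iff
  by (rule parabolic_iff_cross_inversions_empty[OF permutes_compose[OF w sref_permutes[OF i]] i(2)])

lemma coset_iff_card_cross_inversions_eq_1:
  assumes w: "w permutes {1..n}" and i: "1 \<le> i" "i < n"
  shows "w \<in> (\<lambda>g. sref i \<circ> g) ` parabolic n i \<longleftrightarrow> card (cross_inversions n i w) = 1"
proof
  assume "w \<in> (\<lambda>g. sref i \<circ> g) ` parabolic n i"
  then have "cross_inversions n i (sref i \<circ> w) = {}"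
    using coset_iff_cross_inversions_sref_comp_empty[OF w i] by simp
  then obtain k l where "cross_inversions n i w = {(k, l)}"
    by (rule cross_inversions_sref_comp_emptyE[OF w i])
  then show "card (cross_inversions n i w) = 1"
    by simp
next
  assume "card (cross_inversions n i w) = 1"
  then obtain x where "cross_inversions n i w = {x}"
    by (rule card_1_singletonE)
  moreover obtain k l where "x = (k, l)"
    by (cases x)
  ultimately have "cross_inversions n i (sref i \<circ> w) = {}"
    using cross_inversions_singleton_imp_sref_comp_empty[OF w i(2)] by simp
  then show "w \<in> (\<lambda>g. sref i \<circ> g) ` parabolic n i"
    using coset_iff_cross_inversions_sref_comp_empty[OF w i] by simp
qed

lemma descents_of_cosetE:
  assumes w: "w permutes {1..n}" and i: "1 \<le> i" "i < n"
    and coset: "w \<in> (\<lambda>g. sref i \<circ> g) ` parabolic n i"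
  obtains j where "descents n i w = {j}"
    and "(pprod n i w (j - 1) (word n i ! (j - 1)), pprod n i w (j - 1) (Suc (word n i ! (j - 1))))
      = (Suc i, i)"
proof -
  have "cross_inversions n i (sref i \<circ> w) = {}"
    using coset coset_iff_cross_inversions_sref_comp_empty[OF w i] by simp
  then obtain k l where kl: "cross_inversions n i w = {(k, l)}" "w k = Suc i" "w l = i"
    by (rule cross_inversions_sref_comp_emptyE[OF w i])
  then have "card (descents n i w) = 1"
    using bij_betw_same_card[OF bij_betw_step_pair_descents[OF w i]] by simp
  then obtain j where j: "descents n i w = {j}"
    by (rule card_1_singletonE)
  then have "step_pair i j = (k, l)" and j_range: "j \<in> {1..i * (n - i)}"
    using kl(1) bij_betw_apply[OF bij_betw_step_pair_descents[OF w i]] unfolding descents_def by blast+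
  then have "(pprod n i w (j - 1) (word n i ! (j - 1)), pprod n i w (j - 1) (Suc (word n i ! (j - 1))))
      = (Suc i, i)"
    using pprod_step(4)[OF i j_range] kl(2,3) by simp
  with j show ?thesis
    by (rule that)
qed

theorem lemma5p2:
  fixes n i :: nat and w :: "nat \<Rightarrow> nat"
  assumes "3 \<le> n" and "1 \<le> i" and "i \<le> n - 1" and "w permutes {1..n}"
  shows "((\<forall>j\<in>{1..i * (n - i)}. bruhat_less n (pprod n i w (j - 1)) (pprod n i w j))
           \<longleftrightarrow> w \<in> parabolic n i) \<and>
         (card {j\<in>{1..i * (n - i)}. \<not> bruhat_less n (pprod n i w (j - 1)) (pprod n i w j)} = 1
           \<longleftrightarrow> w \<in> (\<lambda>g. sref i \<circ> g) ` parabolic n i) \<and>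
         (w \<in> (\<lambda>g. sref i \<circ> g) ` parabolic n i \<longrightarrow>
           (\<exists>!j. j \<in> {1..i * (n - i)} \<and> bruhat_less n (pprod n i w j) (pprod n i w (j - 1))) \<and>
           (\<forall>j\<in>{1..i * (n - i)}. bruhat_less n (pprod n i w j) (pprod n i w (j - 1)) \<longrightarrow>
              (pprod n i w (j - 1) (word n i ! (j - 1)), pprod n i w (j - 1) (Suc (word n i ! (j - 1))))
                = (Suc i, i)))"
proof -
  have w: "w permutes {1..n}" and i: "1 \<le> i" "i < n"
    using assms by auto
  have "card (descents n i w) = 1 \<longleftrightarrow> w \<in> (\<lambda>g. sref i \<circ> g) ` parabolic n i"
    unfolding bij_betw_same_card[OF bij_betw_step_pair_descents[OF w i]]
      coset_iff_card_cross_inversions_eq_1[OF w i] ..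
  moreover have "(\<exists>!j. j \<in> descents n i w) \<and>
      (\<forall>j\<in>descents n i w.
        (pprod n i w (j - 1) (word n i ! (j - 1)), pprod n i w (j - 1) (Suc (word n i ! (j - 1)))) = (Suc i, i))"
    if coset: "w \<in> (\<lambda>g. sref i \<circ> g) ` parabolic n i"
  proof -
    obtain j where "descents n i w = {j}"
      and "(pprod n i w (j - 1) (word n i ! (j - 1)), pprod n i w (j - 1) (Suc (word n i ! (j - 1))))
        = (Suc i, i)"
      by (rule descents_of_cosetE[OF w i coset])
    then show ?thesis
      by simp
  qed
  ultimately show ?thesis
    using all_ascents_iff_parabolic[OF w i] non_ascents_eq_descents[OF w i] unfolding descents_def by auto
qed

end
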